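(* Let $\pi>0$, $\bar d>0$, $c\ge0$, $0<\theta_1<\dots<\theta_K$, $0\le\beta_1<\dots<\beta_M\le1$, $A:[0,D]\to[0,\bar d]$ continuously differentiable and decreasing, and $J$ an increasing function. Let $L(Q,\beta,\theta)=\theta[\bar d-\beta A(Q)]-\pi(1-\beta)A(Q)$, $\bar S(Q,\Pi,\Lambda)=L(Q,\Lambda)-\Pi$, $\sigma(Q,\beta,\theta)=-[\theta\beta+\pi(1-\beta)]A'(Q)$, $P(Q,\beta)=\pi(1-\beta)A(Q)$, $U(Q,\beta)=\bar d-\beta A(Q)$. Enumerate the $KM$ types as $\Lambda_1,\dots,\Lambda_{KM}$ with $\sigma(Q,\Lambda_1)\le\dots\le\sigma(Q,\Lambda_{KM})$, let $q(\Lambda_i)\ge0$ be the probability of type $\Lambda_i$, and let $\epsilon$ be an index with $\bar S(Q,\Pi,\Lambda_\epsilon)\le\bar S(Q,\Pi,\Lambda_i)$ for all $i$ and all $(Q,\Pi)$. Put $\eta^-(\Lambda_i,Q_i,Q_{i-1})=L(Q_i,\Lambda_i)-L(Q_{i-1},\Lambda_i)$ and $\eta^+(\Lambda_i,Q_i,Q_{i+1})=L(Q_i,\Lambda_i)-L(Q_{i+1},\Lambda_i)$. Fix data caps $\bm Q=(Q_1,\dots,Q_{KM})$ with $0\le Q_1\le\dots\le Q_{KM}\le D$ and consider the problem of choosing $\Pi_1,\dots,\Pi_{KM}\in\mathbb{R}$ to maximize $$\sum_{i=1}^{KM}q(\Lambda_i)\big[\Pi_i+P(Q_i,\Lambda_i)-c\,U(Q_i,\Lambda_i)-J(Q_i)\big]$$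 subject to: $\Pi_\epsilon\le L(Q_\epsilon,\Lambda_\epsilon)$; for $i=1,\dots,\epsilon-1$: $\Pi_i\le\Pi_{i+1}+\eta^+(\Lambda_i,Q_i,Q_{i+1})$ and $\Pi_i\ge\Pi_{i+1}-\eta^-(\Lambda_{i+1},Q_{i+1},Q_i)$; for $i=\epsilon+1,\dots,KM$: $\Pi_i\le\Pi_{i-1}+\eta^-(\Lambda_i,Q_i,Q_{i-1})$ and $\Pi_i\ge\Pi_{i-1}-\eta^+(\Lambda_{i-1},Q_{i-1},Q_i)$. Then the optimal prices are given by $$\Pi^*_\epsilon(\bm Q)=L(Q_\epsilon,\Lambda_\epsilon),\quad \Pi^*_i(\bm Q)=\Pi^*_{i+1}(\bm Q)+\eta^+(\Lambda_i,Q_i,Q_{i+1})\ (i<\epsilon),\quad \Pi^*_i(\bm Q)=\Pi^*_{i-1}(\bm Q)+\eta^-(\Lambda_i,Q_i,Q_{i-1})\ (i>\epsilon).$$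
   Context: Model: a mobile network operator offers one item (data cap $Q_i$, subscription fee $\Pi_i$) for each user type $\Lambda_i=(\beta,\theta)$ (network substitutability $\beta$, data valuation $\theta$); $\pi$ is the overage price, $\bar d$ the mean demand, $A(Q)$ the expected overage consumption under cap $Q$ (decreasing, convex). The objective is the operator's expected profit: subscription plus overage revenue $P$, minus operational cost $c\,U$ ($U$ = expected consumption) and capacity cost $J$. The constraints are sufficient conditions for individual rationality and incentive compatibility. $\sigma$ is the willingness-to-pay, $\Lambda_\epsilon$ the smallest-payoff type. *)

theory Defs
  imports "HOL-Analysis.Analysis"
begin

text \<open>A user type is a pair (beta, theta): network substitutability and data valuation.\<close>

definition Lval :: "real \<Rightarrow> real \<Rightarrow> (real \<Rightarrow> real) \<Rightarrow> real \<Rightarrow> real \<times> real \<Rightarrow> real" where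
  "Lval pr dbar A Q Lam = (case Lam of (b, t) \<Rightarrow> t * (dbar - b * A Q) - pr * (1 - b) * A Q)"

definition Sbar :: "real \<Rightarrow> real \<Rightarrow> (real \<Rightarrow> real) \<Rightarrow> real \<Rightarrow> real \<Rightarrow> real \<times> real \<Rightarrow> real" where
  "Sbar pr dbar A Q Pr Lam = Lval pr dbar A Q Lam - Pr"

definition sigma :: "real \<Rightarrow> (real \<Rightarrow> real) \<Rightarrow> real \<Rightarrow> real \<times> real \<Rightarrow> real" where
  "sigma pr A' Q Lam = (case Lam of (b, t) \<Rightarrow> - (t * b + pr * (1 - b)) * A' Q)"

definition Pov :: "real \<Rightarrow> (real \<Rightarrow> real) \<Rightarrow> real \<Rightarrow> real \<times> real \<Rightarrow> real" where
  "Pov pr A Q Lam = (case Lam of (b, t) \<Rightarrow> pr * (1 - b) * A Q)"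

definition Ucons :: "real \<Rightarrow> (real \<Rightarrow> real) \<Rightarrow> real \<Rightarrow> real \<times> real \<Rightarrow> real" where
  "Ucons dbar A Q Lam = (case Lam of (b, t) \<Rightarrow> dbar - b * A Q)"

definition eta_minus :: "real \<Rightarrow> real \<Rightarrow> (real \<Rightarrow> real) \<Rightarrow> real \<times> real \<Rightarrow> real \<Rightarrow> real \<Rightarrow> real" where
  "eta_minus pr dbar A Lam Qi Qprev = Lval pr dbar A Qi Lam - Lval pr dbar A Qprev Lam"

definition eta_plus :: "real \<Rightarrow> real \<Rightarrow> (real \<Rightarrow> real) \<Rightarrow> real \<times> real \<Rightarrow> real \<Rightarrow> real \<Rightarrow> real" where
  "eta_plus pr dbar A Lam Qi Qnext = Lval pr dbar A Qi Lam - Lval pr dbar A Qnext Lam"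

definition profit :: "real \<Rightarrow> real \<Rightarrow> real \<Rightarrow> (real \<Rightarrow> real) \<Rightarrow> (real \<Rightarrow> real) \<Rightarrow> nat
    \<Rightarrow> (nat \<Rightarrow> real \<times> real) \<Rightarrow> (nat \<Rightarrow> real) \<Rightarrow> (nat \<Rightarrow> real) \<Rightarrow> (nat \<Rightarrow> real) \<Rightarrow> real" where
  "profit pr dbar c A J N Lam q Qs Pis =
     (\<Sum>i = 1..N. q i * (Pis i + Pov pr A (Qs i) (Lam i) - c * Ucons dbar A (Qs i) (Lam i) - J (Qs i)))"

text \<open>The constraints of the pricing problem (sufficient IR and IC conditions).\<close>
definition feasible :: "real \<Rightarrow> real \<Rightarrow> (real \<Rightarrow> real) \<Rightarrow> nat \<Rightarrow> (nat \<Rightarrow> real \<times> real) \<Rightarrow> nat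
    \<Rightarrow> (nat \<Rightarrow> real) \<Rightarrow> (nat \<Rightarrow> real) \<Rightarrow> bool" where
  "feasible pr dbar A N Lam eps Qs Pis \<longleftrightarrow>
     Pis eps \<le> Lval pr dbar A (Qs eps) (Lam eps) \<and>
     (\<forall>i \<in> {1..<eps}.
        Pis i \<le> Pis (i+1) + eta_plus pr dbar A (Lam i) (Qs i) (Qs (i+1)) \<and>
        Pis i \<ge> Pis (i+1) - eta_minus pr dbar A (Lam (i+1)) (Qs (i+1)) (Qs i)) \<and>
     (\<forall>i \<in> {eps+1..N}.
        Pis i \<le> Pis (i-1) + eta_minus pr dbar A (Lam i) (Qs i) (Qs (i-1)) \<and>
        Pis i \<ge> Pis (i-1) - eta_plus pr dbar A (Lam (i-1)) (Qs (i-1)) (Qs i))"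

end

theory Submission
  imports Defs
begin

text \<open>The willingness-to-pay \<open>sigma\<close> is the derivative of \<open>Lval\<close> in the data cap. Since the types
  are sorted by \<open>sigma\<close>, the difference \<open>Lval Q \<Lambda>\<^sub>i\<^sub>+\<^sub>1 - Lval Q \<Lambda>\<^sub>i\<close> is nondecreasing in \<open>Q\<close>
  (single crossing), and this is exactly what makes the downward constraints hold once every
  upward constraint and the participation constraint of \<open>\<Lambda>\<^sub>\<epsilon>\<close> are binding; so the recursively
  defined prices are feasible. Conversely, chaining the upward constraints outwards from \<open>\<epsilon>\<close> bounds
  every feasible price by the recursive one, and the profit is increasing in each price.
  The ordering of the caps only enters through single crossing.\<close>

lemma nondecreasing_if_has_real_derivative_nonneg_within:
  fixes f f' :: "real \<Rightarrow> real"
  assumes "a \<le> b"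
    and f_deriv: "\<And>x. x \<in> {a..b} \<Longrightarrow> (f has_real_derivative f' x) (at x within {a..b})"
    and f'_nonneg: "\<And>x. x \<in> {a..b} \<Longrightarrow> 0 \<le> f' x"
  shows "f a \<le> f b"
proof -
  have "\<exists>x\<in>{a..b}. f b - f a = (\<lambda>h. f' x * h) (b - a)"
  proof (rule mvt_very_simple[OF \<open>a \<le> b\<close>])
    fix x assume "a \<le> x" "x \<le> b"
    then show "(f has_derivative (\<lambda>h. f' x * h)) (at x within {a..b})"
      using f_deriv[of x] by (simp add: has_field_derivative_def)
  qed
  then obtain x where "x \<in> {a..b}" "f b - f a = f' x * (b - a)" by auto
  with \<open>a \<le> b\<close> f'_nonneg show ?thesis by (metis diff_ge_0_iff_ge mult_nonneg_nonneg)
qed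

lemma Lval_has_real_derivative:
  assumes "(A has_real_derivative A' Q) (at Q within S)"
  shows "((\<lambda>Q. Lval pr dbar A Q Lam) has_real_derivative sigma pr A' Q Lam) (at Q within S)"
proof -
  obtain b t where Lam: "Lam = (b, t)" by fastforce
  have "((\<lambda>Q. t * dbar - (t * b + pr * (1 - b)) * A Q) has_real_derivative
         - (t * b + pr * (1 - b)) * A' Q) (at Q within S)"
    by (auto intro!: derivative_eq_intros assms simp: algebra_simps)
  moreover have "Lval pr dbar A Q' Lam = t * dbar - (t * b + pr * (1 - b)) * A Q'" for Q'
    unfolding Lval_def Lam by (simp add: algebra_simps)
  ultimately show ?thesis by (simp add: sigma_def Lam)
qed

lemma single_crossing:
  assumes "0 \<le> a" "a \<le> b" "b \<le> D"
    and A_deriv: "\<forall>Q\<in>{0..D}. (A has_real_derivative A' Q) (at Q within {0..D})"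
    and sigma_le: "\<forall>Q\<in>{0..D}. sigma pr A' Q L1 \<le> sigma pr A' Q L2"
  shows "- eta_minus pr dbar A L2 b a \<le> eta_plus pr dbar A L1 a b"
proof -
  let ?h = "\<lambda>Q. Lval pr dbar A Q L2 - Lval pr dbar A Q L1"
  have "?h a \<le> ?h b"
  proof (rule nondecreasing_if_has_real_derivative_nonneg_within[OF \<open>a \<le> b\<close>])
    fix x assume x: "x \<in> {a..b}"
    then have "(A has_real_derivative A' x) (at x within {0..D})"
      using A_deriv assms(1,3) by auto
    then have "(A has_real_derivative A' x) (at x within {a..b})"
      by (rule DERIV_subset) (use assms(1,3) in auto)
    then show "(?h has_real_derivative sigma pr A' x L2 - sigma pr A' x L1) (at x within {a..b})"
      by (intro DERIV_diff Lval_has_real_derivative)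
    show "0 \<le> sigma pr A' x L2 - sigma pr A' x L1"
      using sigma_le x assms(1,3) by auto
  qed
  then show ?thesis by (simp add: eta_minus_def eta_plus_def)
qed

lemma le_backward_recursion:
  fixes x y d :: "nat \<Rightarrow> 'a :: ordered_ab_semigroup_add"
  assumes "x n \<le> y n"
    and x_step: "\<And>k. m \<le> k \<Longrightarrow> k < n \<Longrightarrow> x k \<le> x (Suc k) + d k"
    and y_step: "\<And>k. m \<le> k \<Longrightarrow> k < n \<Longrightarrow> y k = y (Suc k) + d k"
    and "m \<le> i" "i \<le> n"
  shows "x i \<le> y i"
  using \<open>i \<le> n\<close> \<open>m \<le> i\<close>
proof (induction i rule: inc_induct)
  case (step k)
  have "x k \<le> x (Suc k) + d k" using x_step step by simp
  also have "\<dots> \<le> y (Suc k) + d k" using step by (simp add: add_right_mono)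
  also have "\<dots> = y k" using y_step step by simp
  finally show ?case .
qed (use assms(1) in simp)

lemma le_forward_recursion:
  fixes x y d :: "nat \<Rightarrow> 'a :: ordered_ab_semigroup_add"
  assumes "x m \<le> y m"
    and x_step: "\<And>k. m < k \<Longrightarrow> k \<le> n \<Longrightarrow> x k \<le> x (k - 1) + d k"
    and y_step: "\<And>k. m < k \<Longrightarrow> k \<le> n \<Longrightarrow> y k = y (k - 1) + d k"
    and "m \<le> i" "i \<le> n"
  shows "x i \<le> y i"
  using \<open>m \<le> i\<close> \<open>i \<le> n\<close>
proof (induction i rule: dec_induct)
  case (step k)
  have "x (Suc k) \<le> x k + d (Suc k)" using x_step[of "Suc k"] step by simp
  also have "\<dots> \<le> y k + d (Suc k)" using step by (simp add: add_right_mono)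
  also have "\<dots> = y (Suc k)" using y_step[of "Suc k"] step by simp
  finally show ?case .
qed (use assms(1) in simp)

lemma feasible_le_recursive_prices:
  assumes "feasible pr dbar A N Lam eps Qs Pis" and "eps \<in> {1..N}"
    and "Pistar eps = Lval pr dbar A (Qs eps) (Lam eps)"
    and "\<forall>i\<in>{1..<eps}.
          Pistar i = Pistar (i+1) + eta_plus pr dbar A (Lam i) (Qs i) (Qs (i+1))"
    and "\<forall>i\<in>{eps+1..N}.
          Pistar i = Pistar (i-1) + eta_minus pr dbar A (Lam i) (Qs i) (Qs (i-1))"
    and "i \<in> {1..N}"
  shows "Pis i \<le> Pistar i"
proof (cases "i \<le> eps")
  case True
  show ?thesis
    by (rule le_backward_recursion[where m = 1 and n = eps
          and d = "\<lambda>k. eta_plus pr dbar A (Lam k) (Qs k) (Qs (k+1))"])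
      (use assms True in \<open>auto simp: feasible_def\<close>)
next
  case False
  show ?thesis
    by (rule le_forward_recursion[where m = eps and n = N
          and d = "\<lambda>k. eta_minus pr dbar A (Lam k) (Qs k) (Qs (k-1))"])
      (use assms False in \<open>auto simp: feasible_def\<close>)
qed

lemma recursive_prices_feasible:
  assumes "eps \<in> {1..N}"
    and crossing: "\<forall>j\<in>{1..<N}.
          - eta_minus pr dbar A (Lam (j+1)) (Qs (j+1)) (Qs j) \<le> eta_plus pr dbar A (Lam j) (Qs j) (Qs (j+1))"
    and Pistar_eps: "Pistar eps = Lval pr dbar A (Qs eps) (Lam eps)"
    and Pistar_below: "\<forall>i\<in>{1..<eps}.
          Pistar i = Pistar (i+1) + eta_plus pr dbar A (Lam i) (Qs i) (Qs (i+1))"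
    and Pistar_above: "\<forall>i\<in>{eps+1..N}.
          Pistar i = Pistar (i-1) + eta_minus pr dbar A (Lam i) (Qs i) (Qs (i-1))"
  shows "feasible pr dbar A N Lam eps Qs Pistar"
  unfolding feasible_def
proof (intro conjI ballI)
  fix i assume "i \<in> {1..<eps}"
  then show "Pistar i \<le> Pistar (i+1) + eta_plus pr dbar A (Lam i) (Qs i) (Qs (i+1))"
    and "Pistar (i+1) - eta_minus pr dbar A (Lam (i+1)) (Qs (i+1)) (Qs i) \<le> Pistar i"
    using Pistar_below crossing \<open>eps \<in> {1..N}\<close> by fastforce+
next
  fix i assume i: "i \<in> {eps+1..N}"
  with \<open>eps \<in> {1..N}\<close> have "i - 1 \<in> {1..<N}" and "i - 1 + 1 = i" by auto
  then show "Pistar i \<le> Pistar (i-1) + eta_minus pr dbar A (Lam i) (Qs i) (Qs (i-1))"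
    and "Pistar (i-1) - eta_plus pr dbar A (Lam (i-1)) (Qs (i-1)) (Qs i) \<le> Pistar i"
    using Pistar_above crossing[rule_format, of "i - 1"] i by auto
qed (use Pistar_eps in simp)

lemma profit_mono_prices:
  assumes "\<forall>i\<in>{1..N}. q i \<ge> 0" and "\<forall>i\<in>{1..N}. Pis i \<le> Pis' i"
  shows "profit pr dbar c A J N Lam q Qs Pis \<le> profit pr dbar c A J N Lam q Qs Pis'"
  unfolding profit_def using assms by (intro sum_mono mult_left_mono) auto

theorem theorem3:
  fixes K M N eps :: nat
    and pr dbar c D :: real
    and theta beta :: "nat \<Rightarrow> real"
    and A A' J :: "real \<Rightarrow> real"
    and Lam :: "nat \<Rightarrow> real \<times> real"
    and q Qs Pistar :: "nat \<Rightarrow> real"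
  assumes pi_pos: "pr > 0" and dbar_pos: "dbar > 0" and c_nonneg: "c \<ge> 0"
    and K_pos: "K \<ge> 1" and M_pos: "M \<ge> 1" and N_def: "N = K * M"
    and theta_pos: "theta 1 > 0" and theta_mono: "strict_mono_on {1..K} theta"
    and beta_lo: "beta 1 \<ge> 0" and beta_hi: "beta M \<le> 1" and beta_mono: "strict_mono_on {1..M} beta"
    and A_range: "\<forall>Q\<in>{0..D}. 0 \<le> A Q \<and> A Q \<le> dbar"
    and A_deriv: "\<forall>Q\<in>{0..D}. (A has_real_derivative A' Q) (at Q within {0..D})"
    and A'_cont: "continuous_on {0..D} A'"
    and A_decr: "\<forall>x\<in>{0..D}. \<forall>y\<in>{0..D}. x \<le> y \<longrightarrow> A y \<le> A x"
    and J_incr: "mono J"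
    and Lam_enum: "bij_betw Lam {1..N} ((beta ` {1..M}) \<times> (theta ` {1..K}))"
    and sigma_sorted: "\<forall>Q\<in>{0..D}. \<forall>i\<in>{1..<N}. sigma pr A' Q (Lam i) \<le> sigma pr A' Q (Lam (i+1))"
    and q_nonneg: "\<forall>i\<in>{1..N}. q i \<ge> 0" and q_sum: "(\<Sum>i = 1..N. q i) = 1"
    and eps_range: "eps \<in> {1..N}"
    and eps_min: "\<forall>Q\<in>{0..D}. \<forall>Pr. \<forall>i\<in>{1..N}.
                    Sbar pr dbar A Q Pr (Lam eps) \<le> Sbar pr dbar A Q Pr (Lam i)"
    and Qs_mono: "\<forall>i\<in>{1..<N}. Qs i \<le> Qs (i+1)" and Qs_lo: "0 \<le> Qs 1" and Qs_hi: "Qs N \<le> D"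
    and Pistar_eps: "Pistar eps = Lval pr dbar A (Qs eps) (Lam eps)"
    and Pistar_below: "\<forall>i\<in>{1..<eps}.
          Pistar i = Pistar (i+1) + eta_plus pr dbar A (Lam i) (Qs i) (Qs (i+1))"
    and Pistar_above: "\<forall>i\<in>{eps+1..N}.
          Pistar i = Pistar (i-1) + eta_minus pr dbar A (Lam i) (Qs i) (Qs (i-1))"
  shows "feasible pr dbar A N Lam eps Qs Pistar \<and>
         (\<forall>Pis. feasible pr dbar A N Lam eps Qs Pis \<longrightarrow>
            profit pr dbar c A J N Lam q Qs Pis \<le> profit pr dbar c A J N Lam q Qs Pistar)"
proof (intro conjI allI impI)
  have Qs_range: "Qs i \<in> {0..D}" if "i \<in> {1..N}" for i
  proof -
    have step: "\<And>k. k \<in> {1..<N} \<Longrightarrow> Qs k \<le> Qs (Suc k)" using Qs_mono by simp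
    have "Qs 1 \<le> Qs i" by (rule lift_Suc_mono_le_ivl[where N = "{1..<N}" and f = Qs, OF step]) (use that in auto)
    moreover have "Qs i \<le> Qs N" by (rule lift_Suc_mono_le_ivl[where N = "{1..<N}" and f = Qs, OF step]) (use that in auto)
    ultimately show ?thesis using Qs_lo Qs_hi by simp
  qed
  have "- eta_minus pr dbar A (Lam (j+1)) (Qs (j+1)) (Qs j) \<le> eta_plus pr dbar A (Lam j) (Qs j) (Qs (j+1))"
    if "j \<in> {1..<N}" for j
  proof (rule single_crossing[OF _ _ _ A_deriv])
    show "0 \<le> Qs j" "Qs (j+1) \<le> D" using Qs_range[of j] Qs_range[of "j+1"] that by auto
    show "Qs j \<le> Qs (j+1)" using Qs_mono that by blast
    show "\<forall>Q\<in>{0..D}. sigma pr A' Q (Lam j) \<le> sigma pr A' Q (Lam (j+1))"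
      using sigma_sorted that by blast
  qed
  then show "feasible pr dbar A N Lam eps Qs Pistar"
    by (intro recursive_prices_feasible[OF eps_range _ Pistar_eps Pistar_below Pistar_above]) blast
next
  fix Pis assume "feasible pr dbar A N Lam eps Qs Pis"
  then have "\<forall>i\<in>{1..N}. Pis i \<le> Pistar i"
    using feasible_le_recursive_prices[OF _ eps_range Pistar_eps Pistar_below Pistar_above] by blast
  with q_nonneg show "profit pr dbar c A J N Lam q Qs Pis \<le> profit pr dbar c A J N Lam q Qs Pistar"
    by (rule profit_mono_prices)
qed

end
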